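(* Let $(\mathcal{C},S)$ be a quasi-schemoid and let $F\colon(\mathcal{C},S)\to(\mathcal{C},S)$ be a morphism of quasi-schemoids with $F\simeq 1_{\mathcal{C}}$. Suppose that the set $\mathbf{1}=\{1_x\}_{x\in ob(\mathcal{C})}$ of identity morphisms is contained in a single element of the partition $S$, and that $F(f)$ is an identity morphism for some non-identity morphism $f\in mor(\mathcal{C})$. Then there exist $\sigma,\tau\in S$ such that $\tau$ contains a non-identity morphism and $p^{\sigma}_{\sigma\tau}\neq0$ or $p^{\sigma}_{\tau\sigma}\neq0$.
   Context: A quasi-schemoid is a pair $(\mathcal{C},S)$ where $\mathcal{C}$ is a small category and $S$ is a partition of $mor(\mathcal{C})$ such that for all $\sigma,\tau,\mu\in S$ and all $f,g\in\mu$ the sets $\{(a,b)\in\sigma\times\tau : s(a)=t(b),\ a\circ b=f\}$ and $\{(a,b)\in\sigma\times\tau : s(a)=t(b),\ a\circ b=g\}$ have the same cardinality; this common cardinality is denoted $p^{\mu}_{\sigma\tau}$. A morphism of quasi-schemoids is a functor sending each block of the source partition into some block of the target partition. Product: $(\mathcal{C},S)\times(\mathcal{E},S')=(\mathcal{C}\times\mathcal{E},\{\sigma\times\tau\})$. $[1]$ is the category with objects $0,1$ and one non-identity morphism $0\to1$, and $I=([1],\{\{f\}\}_{f\in mor([1])})$. A homotopy $H\colon F\Rightarrow G$ between morphisms $F,G\colon(\mathcal{C},S)\to(\mathcal{D},S')$ is a morphism of quasi-schemoids $H\colon(\mathcal{C},S)\times I\to(\mathcal{D},S')$ with $H\circ\varepsilon_0=F$,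 $H\circ\varepsilon_1=G$, where $\varepsilon_i(a)=(a,i)$, $\varepsilon_i(f)=(f,1_i)$. $F\sim G$ if there is a homotopy $F\Rightarrow G$ or $G\Rightarrow F$; $F\simeq G$ if there is a finite chain $F=F_0\sim\cdots\sim F_n=G$. *)

theory Defs
  imports Main "HOL-Library.Equipollence"
begin

(* A small category: carrier sets of objects and morphisms, source/target,
   identities and composition.  comp a b = a \<circ> b, defined when dom a = cod b. *)
record ('o,'m) cat =
  Obj  :: "'o set"
  Mor  :: "'m set"
  Dom  :: "'m \<Rightarrow> 'o"
  Cod  :: "'m \<Rightarrow> 'o"
  Idm  :: "'o \<Rightarrow> 'm"
  Comp :: "'m \<Rightarrow> 'm \<Rightarrow> 'm"

definition is_cat :: "('o,'m) cat \<Rightarrow> bool" where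
  "is_cat C \<longleftrightarrow>
     (\<forall>f\<in>Mor C. Dom C f \<in> Obj C \<and> Cod C f \<in> Obj C) \<and>
     (\<forall>x\<in>Obj C. Idm C x \<in> Mor C \<and> Dom C (Idm C x) = x \<and> Cod C (Idm C x) = x) \<and>
     (\<forall>a\<in>Mor C. \<forall>b\<in>Mor C. Dom C a = Cod C b \<longrightarrow>
         Comp C a b \<in> Mor C \<and> Dom C (Comp C a b) = Dom C b \<and> Cod C (Comp C a b) = Cod C a) \<and>
     (\<forall>f\<in>Mor C. Comp C (Idm C (Cod C f)) f = f \<and> Comp C f (Idm C (Dom C f)) = f) \<and>
     (\<forall>a\<in>Mor C. \<forall>b\<in>Mor C. \<forall>c\<in>Mor C. Dom C a = Cod C b \<longrightarrow> Dom C b = Cod C c \<longrightarrow>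
         Comp C (Comp C a b) c = Comp C a (Comp C b c))"

definition is_partition :: "'a set set \<Rightarrow> 'a set \<Rightarrow> bool" where
  "is_partition S A \<longleftrightarrow> (\<forall>\<sigma>\<in>S. \<sigma> \<noteq> {}) \<and> \<Union>S = A \<and>
     (\<forall>\<sigma>\<in>S. \<forall>\<tau>\<in>S. \<sigma> \<noteq> \<tau> \<longrightarrow> \<sigma> \<inter> \<tau> = {})"

definition pset :: "('o,'m) cat \<Rightarrow> 'm set \<Rightarrow> 'm set \<Rightarrow> 'm \<Rightarrow> ('m \<times> 'm) set" where
  "pset C \<sigma> \<tau> f = {(a,b). a \<in> \<sigma> \<and> b \<in> \<tau> \<and> Dom C a = Cod C b \<and> Comp C a b = f}"

(* same cardinality = equipollent (cardinalities may be infinite) *)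
definition quasi_schemoid :: "('o,'m) cat \<Rightarrow> 'm set set \<Rightarrow> bool" where
  "quasi_schemoid C S \<longleftrightarrow> is_cat C \<and> is_partition S (Mor C) \<and>
     (\<forall>\<sigma>\<in>S. \<forall>\<tau>\<in>S. \<forall>\<mu>\<in>S. \<forall>f\<in>\<mu>. \<forall>g\<in>\<mu>. pset C \<sigma> \<tau> f \<approx> pset C \<sigma> \<tau> g)"

(* p^\<mu>_{\<sigma>\<tau>} \<noteq> 0 : the common cardinality is nonzero, i.e. the sets are nonempty *)
definition p_nonzero :: "('o,'m) cat \<Rightarrow> 'm set \<Rightarrow> 'm set \<Rightarrow> 'm set \<Rightarrow> bool" where
  "p_nonzero C \<mu> \<sigma> \<tau> \<longleftrightarrow> (\<exists>f\<in>\<mu>. pset C \<sigma> \<tau> f \<noteq> {})"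

(* functors as pairs (object map, morphism map), only relevant on carriers *)
type_synonym ('o1,'m1,'o2,'m2) ftor = "('o1 \<Rightarrow> 'o2) \<times> ('m1 \<Rightarrow> 'm2)"

definition is_functor :: "('o1,'m1) cat \<Rightarrow> ('o2,'m2) cat \<Rightarrow> ('o1,'m1,'o2,'m2) ftor \<Rightarrow> bool" where
  "is_functor C D F \<longleftrightarrow>
     (\<forall>x\<in>Obj C. fst F x \<in> Obj D) \<and>
     (\<forall>f\<in>Mor C. snd F f \<in> Mor D \<and> Dom D (snd F f) = fst F (Dom C f) \<and> Cod D (snd F f) = fst F (Cod C f)) \<and>
     (\<forall>x\<in>Obj C. snd F (Idm C x) = Idm D (fst F x)) \<and>
     (\<forall>a\<in>Mor C. \<forall>b\<in>Mor C. Dom C a = Cod C b \<longrightarrow> snd F (Comp C a b) = Comp D (snd F a) (snd F b))"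

definition qs_morphism :: "('o1,'m1) cat \<Rightarrow> 'm1 set set \<Rightarrow> ('o2,'m2) cat \<Rightarrow> 'm2 set set
     \<Rightarrow> ('o1,'m1,'o2,'m2) ftor \<Rightarrow> bool" where
  "qs_morphism C S D S' F \<longleftrightarrow> is_functor C D F \<and> (\<forall>\<sigma>\<in>S. \<exists>\<sigma>'\<in>S'. snd F ` \<sigma> \<subseteq> \<sigma>')"

definition id_ftor :: "('o,'m,'o,'m) ftor" where
  "id_ftor = (id, id)"

definition prod_cat :: "('o1,'m1) cat \<Rightarrow> ('o2,'m2) cat \<Rightarrow> ('o1 \<times> 'o2, 'm1 \<times> 'm2) cat" where
  "prod_cat C E = \<lparr> Obj = Obj C \<times> Obj E, Mor = Mor C \<times> Mor E,
      Dom = (\<lambda>(f,g). (Dom C f, Dom E g)), Cod = (\<lambda>(f,g). (Cod C f, Cod E g)),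
      Idm = (\<lambda>(x,y). (Idm C x, Idm E y)),
      Comp = (\<lambda>(a,a') (b,b'). (Comp C a b, Comp E a' b')) \<rparr>"

definition prod_part :: "'a set set \<Rightarrow> 'b set set \<Rightarrow> ('a \<times> 'b) set set" where
  "prod_part S S' = {\<sigma> \<times> \<tau> | \<sigma> \<tau>. \<sigma> \<in> S \<and> \<tau> \<in> S'}"

(* the category [1]: objects 0,1; morphisms (i,j) with i \<le> j \<le> 1 meaning i \<rightarrow> j *)
definition cat1 :: "(nat, nat \<times> nat) cat" where
  "cat1 = \<lparr> Obj = {0,1}, Mor = {(i,j). i \<le> j \<and> j \<le> 1},
      Dom = fst, Cod = snd, Idm = (\<lambda>i. (i,i)),
      Comp = (\<lambda>a b. (fst b, snd a)) \<rparr>"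

definition part1 :: "(nat \<times> nat) set set" where
  "part1 = {{f} | f. f \<in> Mor cat1}"

definition homotopy :: "('o1,'m1) cat \<Rightarrow> 'm1 set set \<Rightarrow> ('o2,'m2) cat \<Rightarrow> 'm2 set set
     \<Rightarrow> ('o1 \<times> nat, 'm1 \<times> (nat \<times> nat), 'o2, 'm2) ftor
     \<Rightarrow> ('o1,'m1,'o2,'m2) ftor \<Rightarrow> ('o1,'m1,'o2,'m2) ftor \<Rightarrow> bool" where
  "homotopy C S D S' H F G \<longleftrightarrow>
     qs_morphism (prod_cat C cat1) (prod_part S part1) D S' H \<and>
     (\<forall>x\<in>Obj C. fst H (x,0) = fst F x \<and> fst H (x,1) = fst G x) \<and>
     (\<forall>f\<in>Mor C. snd H (f,(0,0)) = snd F f \<and> snd H (f,(1,1)) = snd G f)"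

definition htpy_step :: "('o1,'m1) cat \<Rightarrow> 'm1 set set \<Rightarrow> ('o2,'m2) cat \<Rightarrow> 'm2 set set
     \<Rightarrow> ('o1,'m1,'o2,'m2) ftor \<Rightarrow> ('o1,'m1,'o2,'m2) ftor \<Rightarrow> bool" where
  "htpy_step C S D S' F G \<longleftrightarrow> (\<exists>H. homotopy C S D S' H F G) \<or> (\<exists>H. homotopy C S D S' H G F)"

definition htpy_equiv :: "('o1,'m1) cat \<Rightarrow> 'm1 set set \<Rightarrow> ('o2,'m2) cat \<Rightarrow> 'm2 set set
     \<Rightarrow> ('o1,'m1,'o2,'m2) ftor \<Rightarrow> ('o1,'m1,'o2,'m2) ftor \<Rightarrow> bool" where
  "htpy_equiv C S D S' = (htpy_step C S D S')\<^sup>*\<^sup>*"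

end

theory Submission
  imports Defs
begin

text \<open>Along a chain of homotopies from \<open>F\<close> to the identity there is a single homotopy
\<open>H : G \<Rightarrow> G'\<close> at which the image of \<open>f : x \<rightarrow> y\<close> switches between being and not being an
identity. Writing \<open>u = (0,1)\<close>, naturality gives
\<open>H(f,u) = G'(f) \<circ> H(1\<^sub>x,u) = H(1\<^sub>y,u) \<circ> G(f)\<close>, and all components \<open>H(1\<^sub>z,u)\<close> lie in one
block \<open>\<theta>\<close> because the identities do. If \<open>G(f)\<close> is an identity then \<open>H(f,u) = H(1\<^sub>y,u) \<in> \<theta>\<close>, so
\<open>G'(f) \<circ> H(1\<^sub>x,u)\<close> witnesses \<open>p\<^sup>\<theta>\<^sub>\<tau>\<^sub>\<theta> \<noteq> 0\<close> for the block \<open>\<tau>\<close> of the non-identity \<open>G'(f)\<close>;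
the other case is symmetric.\<close>

lemma rtranclp_property_switch:
  assumes "R\<^sup>*\<^sup>* a b" "P a" "\<not> P b"
  shows "\<exists>c d. R c d \<and> P c \<and> \<not> P d"
  using assms by (induction rule: rtranclp_induct) blast+

lemma cat_Dom_Cod_in_Obj:
  assumes "is_cat C" "f \<in> Mor C"
  shows "Dom C f \<in> Obj C" "Cod C f \<in> Obj C"
  using assms unfolding is_cat_def by auto

lemma cat_Idm:
  assumes "is_cat C" "x \<in> Obj C"
  shows "Idm C x \<in> Mor C" "Dom C (Idm C x) = x" "Cod C (Idm C x) = x"
  using assms unfolding is_cat_def by auto

lemma cat_comp_Idm_Dom:
  assumes "is_cat C" "g \<in> Mor C"
  shows "Comp C g (Idm C (Dom C g)) = g"
  using assms unfolding is_cat_def by auto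

lemma cat_comp_Idm_Cod:
  assumes "is_cat C" "g \<in> Mor C"
  shows "Comp C (Idm C (Cod C g)) g = g"
  using assms unfolding is_cat_def by auto

lemma partition_block:
  assumes "is_partition S A" "a \<in> A"
  obtains \<sigma> where "\<sigma> \<in> S" "a \<in> \<sigma>"
  using assms unfolding is_partition_def by auto

lemma p_nonzeroI:
  assumes "a \<in> \<sigma>" "b \<in> \<tau>" "Dom C a = Cod C b" "Comp C a b \<in> \<mu>"
  shows "p_nonzero C \<mu> \<sigma> \<tau>"
proof -
  have "(a, b) \<in> pset C \<sigma> \<tau> (Comp C a b)"
    using assms unfolding pset_def by simp
  then show ?thesis
    using assms(4) unfolding p_nonzero_def by blast
qed

lemma homotopy_mor:
  assumes "homotopy C S D S' H G G'" "a \<in> Mor C" "e \<in> Mor cat1"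
  shows "snd H (a, e) \<in> Mor D"
    and "Dom D (snd H (a, e)) = fst H (Dom C a, fst e)"
    and "Cod D (snd H (a, e)) = fst H (Cod C a, snd e)"
  using assms unfolding homotopy_def qs_morphism_def is_functor_def prod_cat_def cat1_def
  by auto

lemma homotopy_comp:
  assumes "homotopy C S D S' H G G'"
    and "a \<in> Mor C" "b \<in> Mor C" "Dom C a = Cod C b"
    and "e \<in> Mor cat1" "e' \<in> Mor cat1" "fst e = snd e'"
  shows "snd H (Comp C a b, (fst e', snd e)) = Comp D (snd H (a, e)) (snd H (b, e'))"
proof -
  have "snd H (Comp (prod_cat C cat1) (a, e) (b, e')) = Comp D (snd H (a, e)) (snd H (b, e'))"
    using assms unfolding homotopy_def qs_morphism_def is_functor_def
    by (auto simp: prod_cat_def cat1_def)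
  then show ?thesis
    by (simp add: prod_cat_def cat1_def)
qed

lemma homotopy_naturality:
  assumes C: "is_cat C" and H: "homotopy C S D S' H G G'" and f: "f \<in> Mor C"
  shows "Comp D (snd G' f) (snd H (Idm C (Dom C f), (0, 1))) = snd H (f, (0, 1))"
    and "Comp D (snd H (Idm C (Cod C f), (0, 1))) (snd G f) = snd H (f, (0, 1))"
proof -
  have ends: "snd H (f, (0, 0)) = snd G f" "snd H (f, (1, 1)) = snd G' f"
    using H f unfolding homotopy_def by auto
  note x = cat_Idm[OF C cat_Dom_Cod_in_Obj(1)[OF C f]]
  note y = cat_Idm[OF C cat_Dom_Cod_in_Obj(2)[OF C f]]
  have u: "(0::nat, 1::nat) \<in> Mor cat1" "(0::nat, 0::nat) \<in> Mor cat1" "(1::nat, 1::nat) \<in> Mor cat1"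
    unfolding cat1_def by auto
  show "Comp D (snd G' f) (snd H (Idm C (Dom C f), (0, 1))) = snd H (f, (0, 1))"
    using homotopy_comp[OF H f x(1) x(3)[symmetric] u(3) u(1)] ends cat_comp_Idm_Dom[OF C f]
    by simp
  show "Comp D (snd H (Idm C (Cod C f), (0, 1))) (snd G f) = snd H (f, (0, 1))"
    using homotopy_comp[OF H y(1) f y(2) u(1) u(2)] ends cat_comp_Idm_Cod[OF C f]
    by simp
qed

lemma homotopy_identity_components_in_block:
  assumes "homotopy C S D S' H G G'" "\<iota> \<in> S" "Idm C ` Obj C \<subseteq> \<iota>"
  obtains \<theta> where "\<theta> \<in> S'" "\<And>x. x \<in> Obj C \<Longrightarrow> snd H (Idm C x, (0, 1)) \<in> \<theta>"
proof -
  have "{(0::nat, 1::nat)} \<in> part1"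
    unfolding part1_def cat1_def by auto
  then have "\<iota> \<times> {(0, 1)} \<in> prod_part S part1"
    using assms(2) unfolding prod_part_def by blast
  then obtain \<theta> where \<theta>: "\<theta> \<in> S'" "snd H ` (\<iota> \<times> {(0, 1)}) \<subseteq> \<theta>"
    using assms(1) unfolding homotopy_def qs_morphism_def by blast
  have "snd H (Idm C x, (0, 1)) \<in> \<theta>" if "x \<in> Obj C" for x
    using that assms(3) \<theta>(2) by blast
  with \<theta>(1) show thesis
    using that by blast
qed

text \<open>The witnesses are \<open>a = H(1\<^sub>x,u)\<close> and \<open>b = H(1\<^sub>y,u)\<close> for \<open>f : x \<rightarrow> y\<close> and
\<open>u = (0,1)\<close>; the equation is naturality of \<open>H\<close> at \<open>f\<close>.\<close>

lemma homotopy_identity_square: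
  assumes C: "is_cat C" and H: "homotopy C S D S' H G G'" and f: "f \<in> Mor C"
    and \<iota>: "\<iota> \<in> S" "Idm C ` Obj C \<subseteq> \<iota>"
  obtains \<theta> a b where "\<theta> \<in> S'" "a \<in> \<theta>" "b \<in> \<theta>" "a \<in> Mor D" "b \<in> Mor D"
    "snd G f \<in> Mor D" "snd G' f \<in> Mor D"
    "Dom D (snd G' f) = Cod D a" "Dom D b = Cod D (snd G f)"
    "Comp D (snd G' f) a = Comp D b (snd G f)"
proof -
  define h where "h z = snd H (Idm C z, (0::nat, 1::nat))" for z
  obtain \<theta> where \<theta>: "\<theta> \<in> S'" "\<And>z. z \<in> Obj C \<Longrightarrow> h z \<in> \<theta>"
    using homotopy_identity_components_in_block[OF H \<iota>] unfolding h_def by blast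
  note obj = cat_Dom_Cod_in_Obj[OF C f]
  have u: "(0::nat, 1::nat) \<in> Mor cat1" "(0::nat, 0::nat) \<in> Mor cat1" "(1::nat, 1::nat) \<in> Mor cat1"
    unfolding cat1_def by auto
  have ends: "snd H (f, (0, 0)) = snd G f" "snd H (f, (1, 1)) = snd G' f"
    using H f unfolding homotopy_def by auto
  have hx: "h (Dom C f) \<in> Mor D" "Cod D (h (Dom C f)) = fst H (Dom C f, 1)"
    using homotopy_mor[OF H cat_Idm(1)[OF C obj(1)] u(1)] cat_Idm(3)[OF C obj(1)]
    unfolding h_def by auto
  have hy: "h (Cod C f) \<in> Mor D" "Dom D (h (Cod C f)) = fst H (Cod C f, 0)"
    using homotopy_mor[OF H cat_Idm(1)[OF C obj(2)] u(1)] cat_Idm(2)[OF C obj(2)]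
    unfolding h_def by auto
  have Gf: "snd G f \<in> Mor D" "Cod D (snd G f) = fst H (Cod C f, 0)"
    using homotopy_mor[OF H f u(2)] ends by auto
  have G'f: "snd G' f \<in> Mor D" "Dom D (snd G' f) = fst H (Dom C f, 1)"
    using homotopy_mor[OF H f u(3)] ends by auto
  have "Comp D (snd G' f) (h (Dom C f)) = Comp D (h (Cod C f)) (snd G f)"
    using homotopy_naturality[OF C H f] unfolding h_def by simp
  then show thesis
    using that[OF \<theta>(1) \<theta>(2)[OF obj(1)] \<theta>(2)[OF obj(2)] hx(1) hy(1) Gf(1) G'f(1)]
      hx(2) hy(2) Gf(2) G'f(2) by simp
qed

lemma commuting_square_Idm_right_p_nonzero:
  assumes D: "is_cat D" and "a \<in> \<theta>" "b \<in> \<theta>" "b \<in> Mor D" "g' \<in> \<tau>"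
    and "Dom D g' = Cod D a" "Dom D b = Cod D g" "Comp D g' a = Comp D b g"
    and "g \<in> Idm D ` Obj D"
  shows "p_nonzero D \<theta> \<tau> \<theta>"
proof -
  obtain w where w: "w \<in> Obj D" "g = Idm D w"
    using assms(9) by blast
  have "Comp D b g = b"
    using assms(7) w cat_Idm(3)[OF D w(1)] cat_comp_Idm_Dom[OF D assms(4)] by simp
  then show ?thesis
    using p_nonzeroI[OF assms(5,2,6)] assms(3,8) by simp
qed

lemma commuting_square_Idm_left_p_nonzero:
  assumes D: "is_cat D" and "a \<in> \<theta>" "b \<in> \<theta>" "a \<in> Mor D" "g \<in> \<tau>"
    and "Dom D g' = Cod D a" "Dom D b = Cod D g" "Comp D g' a = Comp D b g"
    and "g' \<in> Idm D ` Obj D"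
  shows "p_nonzero D \<theta> \<theta> \<tau>"
proof -
  obtain w where w: "w \<in> Obj D" "g' = Idm D w"
    using assms(9) by blast
  have "Comp D g' a = a"
    using assms(6) w cat_Idm(2)[OF D w(1)] cat_comp_Idm_Cod[OF D assms(4)] by simp
  then show ?thesis
    using p_nonzeroI[OF assms(3,5,7)] assms(2,8) by simp
qed

lemma homotopy_from_Idm_p_nonzero:
  assumes C: "is_cat C" and D: "is_cat D" and part: "is_partition S' (Mor D)"
    and H: "homotopy C S D S' H G G'" and f: "f \<in> Mor C"
    and \<iota>: "\<iota> \<in> S" "Idm C ` Obj C \<subseteq> \<iota>"
    and Gf: "snd G f \<in> Idm D ` Obj D"
  shows "\<exists>\<theta>\<in>S'. \<exists>\<tau>\<in>S'. snd G' f \<in> \<tau> \<and> p_nonzero D \<theta> \<tau> \<theta>"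
proof -
  obtain \<theta> a b where sq: "\<theta> \<in> S'" "a \<in> \<theta>" "b \<in> \<theta>" "a \<in> Mor D" "b \<in> Mor D"
    "snd G f \<in> Mor D" "snd G' f \<in> Mor D"
    "Dom D (snd G' f) = Cod D a" "Dom D b = Cod D (snd G f)"
    "Comp D (snd G' f) a = Comp D b (snd G f)"
    by (rule homotopy_identity_square[OF C H f \<iota>])
  obtain \<tau> where \<tau>: "\<tau> \<in> S'" "snd G' f \<in> \<tau>"
    using partition_block[OF part sq(7)] .
  have "p_nonzero D \<theta> \<tau> \<theta>"
    using commuting_square_Idm_right_p_nonzero[OF D sq(2,3,5) \<tau>(2) sq(8,9,10) Gf] .
  with sq(1) \<tau> show ?thesis
    by blast
qed

lemma homotopy_to_Idm_p_nonzero: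
  assumes C: "is_cat C" and D: "is_cat D" and part: "is_partition S' (Mor D)"
    and H: "homotopy C S D S' H G G'" and f: "f \<in> Mor C"
    and \<iota>: "\<iota> \<in> S" "Idm C ` Obj C \<subseteq> \<iota>"
    and G'f: "snd G' f \<in> Idm D ` Obj D"
  shows "\<exists>\<theta>\<in>S'. \<exists>\<tau>\<in>S'. snd G f \<in> \<tau> \<and> p_nonzero D \<theta> \<theta> \<tau>"
proof -
  obtain \<theta> a b where sq: "\<theta> \<in> S'" "a \<in> \<theta>" "b \<in> \<theta>" "a \<in> Mor D" "b \<in> Mor D"
    "snd G f \<in> Mor D" "snd G' f \<in> Mor D"
    "Dom D (snd G' f) = Cod D a" "Dom D b = Cod D (snd G f)"
    "Comp D (snd G' f) a = Comp D b (snd G f)"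
    by (rule homotopy_identity_square[OF C H f \<iota>])
  obtain \<tau> where \<tau>: "\<tau> \<in> S'" "snd G f \<in> \<tau>"
    using partition_block[OF part sq(6)] .
  have "p_nonzero D \<theta> \<theta> \<tau>"
    using commuting_square_Idm_left_p_nonzero[OF D sq(2,3,4) \<tau>(2) sq(8,9,10) G'f] .
  with sq(1) \<tau> show ?thesis
    by blast
qed

theorem proposition3p7:
  fixes C :: "('o,'m) cat" and S :: "'m set set" and F :: "('o,'m,'o,'m) ftor"
  assumes "quasi_schemoid C S"
    and "qs_morphism C S C S F"
    and "htpy_equiv C S C S F id_ftor"
    and "\<exists>\<sigma>\<in>S. Idm C ` Obj C \<subseteq> \<sigma>"
    and "\<exists>f\<in>Mor C. f \<notin> Idm C ` Obj C \<and> snd F f \<in> Idm C ` Obj C"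
  shows "\<exists>\<sigma>\<in>S. \<exists>\<tau>\<in>S. (\<exists>g\<in>\<tau>. g \<notin> Idm C ` Obj C) \<and>
           (p_nonzero C \<sigma> \<sigma> \<tau> \<or> p_nonzero C \<sigma> \<tau> \<sigma>)"
proof -
  have C: "is_cat C" and part: "is_partition S (Mor C)"
    using assms(1) unfolding quasi_schemoid_def by auto
  obtain \<iota> where \<iota>: "\<iota> \<in> S" "Idm C ` Obj C \<subseteq> \<iota>"
    using assms(4) by blast
  obtain f where f: "f \<in> Mor C" "f \<notin> Idm C ` Obj C" "snd F f \<in> Idm C ` Obj C"
    using assms(5) by blast
  let ?is_Idm = "\<lambda>G. snd G f \<in> Idm C ` Obj C"
  have "\<not> ?is_Idm id_ftor"
    using f(2) by (simp add: id_ftor_def)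
  then obtain G G' where step: "htpy_step C S C S G G'" "?is_Idm G" "\<not> ?is_Idm G'"
    using rtranclp_property_switch[of "htpy_step C S C S" F id_ftor ?is_Idm] assms(3) f(3)
    unfolding htpy_equiv_def by blast
  consider H where "homotopy C S C S H G G'" | H where "homotopy C S C S H G' G"
    using step(1) unfolding htpy_step_def by blast
  then show ?thesis
  proof cases
    case (1 H)
    show ?thesis
      using homotopy_from_Idm_p_nonzero[OF C C part 1 f(1) \<iota> step(2)] step(3) by blast
  next
    case (2 H)
    show ?thesis
      using homotopy_to_Idm_p_nonzero[OF C C part 2 f(1) \<iota> step(2)] step(3) by blast
  qed
qed

end
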